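(* Consider the nonatomic game with tolls, in which a class-$l$ mobile at BS $j$ incurs cost density $\bar c_{lj}(\mathbf{m})=c_{lj}(\mathbf{m})+t_{lj}(\mathbf{m})$, where $t_{lj}(\mathbf{m})=\gamma_l\sum_{i=1}^L m_{ij}g_{ij}c'(m_j)$. This game is a potential game with potential function $C(\mathbf{m})=\sum_{j\in\mathcal{N}}\sum_{l=1}^L m_{lj}g_{lj}c(m_j)$, in the sense that $\partial C(\mathbf{m})/\partial m_{lj}=\bar c_{lj}(\mathbf{m})$ for all $l,j$ on the region $\{\mathbf{m}: m_j<1\ \forall j\}$. Furthermore, a congestion profile is system optimal (minimizes $C$ over all congestion profiles) only if it is a Nash equilibrium of this game with tolls.
   Context: Nonatomic model: classes $\mathcal{L}=\{1,\dots,L\}$ of nonatomic mobiles, class $l$ having total mass $M_l>0$, target SINR density $\gamma_l>0$ and power gain $h_{lj}>0$ to BS $j\in\mathcal{N}=\{1,\dots,N\}$; noise power $\sigma^2>0$. A congestion profile is $\mathbf{m}=(m_{lj})$ with $m_{lj}\ge0$, $\sum_j m_{lj}=M_l$. Set $m_j=\sum_l\gamma_l m_{lj}$, $g_{lj}=\gamma_l\sigma^2/h_{lj}$, $c(z)=1/(1-z)$ for $z<1$ and $c(z)=\infty$ for $z\ge1$, $c'(z)=1/(1-z)^2$ for $z<1$ and $c'(z)=\infty$ for $z\ge1$; $c_{lj}(\mathbf{m})=g_{lj}c(m_j)$. $\mathbf{m}$ is a Nash equilibrium of the game with costs $\bar c_{lj}$ if for all $l,j$, $m_{lj}>0$ implies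 $\bar c_{lj}(\mathbf{m})\le \bar c_{lk}(\mathbf{m})$ for all $k$. Standing feasibility assumption: $\sum_l\gamma_l M_l<N$. *)

theory Defs
  imports "HOL-Analysis.Analysis" "HOL-Library.Extended_Real"
begin

text \<open>Classes are indexed by 1..L, base stations by 1..N; a congestion profile
is a function m :: nat => nat => real with m l j the mass of class l at BS j.
Costs that may be infinite are extended reals.\<close>

definition cfun :: "real \<Rightarrow> ereal" where
  "cfun z = (if z < 1 then ereal (1 / (1 - z)) else \<infinity>)"

definition cfun' :: "real \<Rightarrow> ereal" where
  "cfun' z = (if z < 1 then ereal (1 / (1 - z)^2) else \<infinity>)"

definition load :: "nat \<Rightarrow> (nat \<Rightarrow> real) \<Rightarrow> (nat \<Rightarrow> nat \<Rightarrow> real) \<Rightarrow> nat \<Rightarrow> real" where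
  "load L \<gamma> m j = (\<Sum>l\<in>{1..L}. \<gamma> l * m l j)"

definition gcoef :: "(nat \<Rightarrow> real) \<Rightarrow> real \<Rightarrow> (nat \<Rightarrow> nat \<Rightarrow> real) \<Rightarrow> nat \<Rightarrow> nat \<Rightarrow> real" where
  "gcoef \<gamma> \<sigma>2 h l j = \<gamma> l * \<sigma>2 / h l j"

definition is_profile :: "nat \<Rightarrow> nat \<Rightarrow> (nat \<Rightarrow> real) \<Rightarrow> (nat \<Rightarrow> nat \<Rightarrow> real) \<Rightarrow> bool" where
  "is_profile L N M m \<longleftrightarrow>
     (\<forall>l\<in>{1..L}. \<forall>j\<in>{1..N}. 0 \<le> m l j) \<and> (\<forall>l\<in>{1..L}. (\<Sum>j\<in>{1..N}. m l j) = M l)"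

definition cost :: "nat \<Rightarrow> (nat \<Rightarrow> real) \<Rightarrow> real \<Rightarrow> (nat \<Rightarrow> nat \<Rightarrow> real)
                    \<Rightarrow> (nat \<Rightarrow> nat \<Rightarrow> real) \<Rightarrow> nat \<Rightarrow> nat \<Rightarrow> ereal" where
  "cost L \<gamma> \<sigma>2 h m l j = ereal (gcoef \<gamma> \<sigma>2 h l j) * cfun (load L \<gamma> m j)"

definition toll :: "nat \<Rightarrow> (nat \<Rightarrow> real) \<Rightarrow> real \<Rightarrow> (nat \<Rightarrow> nat \<Rightarrow> real)
                    \<Rightarrow> (nat \<Rightarrow> nat \<Rightarrow> real) \<Rightarrow> nat \<Rightarrow> nat \<Rightarrow> ereal" where
  "toll L \<gamma> \<sigma>2 h m l j =
     ereal (\<gamma> l) * (\<Sum>i\<in>{1..L}. ereal (m i j * gcoef \<gamma> \<sigma>2 h i j) * cfun' (load L \<gamma> m j))"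

definition tolled_cost :: "nat \<Rightarrow> (nat \<Rightarrow> real) \<Rightarrow> real \<Rightarrow> (nat \<Rightarrow> nat \<Rightarrow> real)
                    \<Rightarrow> (nat \<Rightarrow> nat \<Rightarrow> real) \<Rightarrow> nat \<Rightarrow> nat \<Rightarrow> ereal" where
  "tolled_cost L \<gamma> \<sigma>2 h m l j = cost L \<gamma> \<sigma>2 h m l j + toll L \<gamma> \<sigma>2 h m l j"

definition social_cost :: "nat \<Rightarrow> nat \<Rightarrow> (nat \<Rightarrow> real) \<Rightarrow> real \<Rightarrow> (nat \<Rightarrow> nat \<Rightarrow> real)
                    \<Rightarrow> (nat \<Rightarrow> nat \<Rightarrow> real) \<Rightarrow> ereal" where
  "social_cost L N \<gamma> \<sigma>2 h m =
     (\<Sum>j\<in>{1..N}. \<Sum>l\<in>{1..L}. ereal (m l j * gcoef \<gamma> \<sigma>2 h l j) * cfun (load L \<gamma> m j))"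

definition is_nash :: "nat \<Rightarrow> nat \<Rightarrow> (nat \<Rightarrow> real) \<Rightarrow> (nat \<Rightarrow> nat \<Rightarrow> real)
                       \<Rightarrow> (nat \<Rightarrow> nat \<Rightarrow> ereal) \<Rightarrow> bool" where
  "is_nash L N M m cb \<longleftrightarrow> is_profile L N M m \<and>
     (\<forall>l\<in>{1..L}. \<forall>j\<in>{1..N}. m l j > 0 \<longrightarrow> (\<forall>k\<in>{1..N}. cb l j \<le> cb l k))"

end

theory Submission
  imports Defs
begin

text \<open>
  Where all loads are below 1, the social cost is the rational function
  \<open>\<Sum>j. S\<^sub>j / (1 - m\<^sub>j)\<close> with \<open>S\<^sub>j = \<Sum>i. m\<^sub>i\<^sub>j g\<^sub>i\<^sub>j\<close>, and its partial
  derivative in \<open>m\<^sub>l\<^sub>j\<close> is \<open>g\<^sub>l\<^sub>j / (1 - m\<^sub>j) + \<gamma>\<^sub>l S\<^sub>j / (1 - m\<^sub>j)\<^sup>2\<close>,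
  which is exactly the tolled cost. A social optimum has finite cost, because the
  uniform profile does (this is where \<open>\<Sum>\<^sub>l \<gamma>\<^sub>l M\<^sub>l < N\<close> enters), so all its
  loads are below 1. If \<open>m\<^sub>l\<^sub>j > 0\<close>, moving a small mass \<open>t > 0\<close> of class \<open>l\<close>
  from BS \<open>j\<close> to BS \<open>k\<close> keeps the profile feasible and cannot decrease the
  cost; the derivative in that direction is the tolled cost at \<open>k\<close> minus the
  tolled cost at \<open>j\<close>, which is therefore nonnegative.
\<close>

definition potential ::
  "nat \<Rightarrow> nat \<Rightarrow> (nat \<Rightarrow> real) \<Rightarrow> (nat \<Rightarrow> nat \<Rightarrow> real) \<Rightarrow> (nat \<Rightarrow> nat \<Rightarrow> real) \<Rightarrow> real" where
  "potential L N \<gamma> g m = (\<Sum>j\<in>{1..N}. (\<Sum>i\<in>{1..L}. m i j * g i j) / (1 - load L \<gamma> m j))"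

definition marginal_cost ::
  "nat \<Rightarrow> (nat \<Rightarrow> real) \<Rightarrow> (nat \<Rightarrow> nat \<Rightarrow> real) \<Rightarrow> (nat \<Rightarrow> nat \<Rightarrow> real) \<Rightarrow> nat \<Rightarrow> nat \<Rightarrow> real" where
  "marginal_cost L \<gamma> g m l j =
     g l j / (1 - load L \<gamma> m j) + \<gamma> l * (\<Sum>i\<in>{1..L}. m i j * g i j) / (1 - load L \<gamma> m j)^2"

lemma load_line: "load L \<gamma> (\<lambda>i j. m i j + t * d i j) j = load L \<gamma> m j + t * load L \<gamma> d j"
  unfolding load_def by (simp add: algebra_simps sum.distrib sum_distrib_left)

lemma social_cost_eq_potential:
  assumes "\<forall>j\<in>{1..N}. load L \<gamma> m j < 1"
  shows "social_cost L N \<gamma> \<sigma>2 h m = ereal (potential L N \<gamma> (gcoef \<gamma> \<sigma>2 h) m)"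
  using assms unfolding social_cost_def potential_def
  by (simp add: cfun_def sum_divide_distrib)

lemma tolled_cost_eq_marginal_cost:
  assumes "load L \<gamma> m j < 1"
  shows "tolled_cost L \<gamma> \<sigma>2 h m l j = ereal (marginal_cost L \<gamma> (gcoef \<gamma> \<sigma>2 h) m l j)"
  using assms unfolding tolled_cost_def cost_def toll_def marginal_cost_def cfun_def cfun'_def
  by (simp add: sum_divide_distrib[symmetric])

lemma has_real_derivative_ratio_line:
  fixes a b c l t0 :: real
  assumes "l < 1"
  shows "((\<lambda>t. (a + (t - t0) * b) / (1 - (l + (t - t0) * c))) has_real_derivative
           b / (1 - l) + a * c / (1 - l)^2) (at t0)"
proof -
  have "((\<lambda>t. (a + (t - t0) * b) / (1 - (l + (t - t0) * c))) has_real_derivative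
          (b * (1 - l) - a * - c) / (1 - l)^2) (at t0)"
    using assms by (auto intro!: derivative_eq_intros simp: power2_eq_square)
  moreover have "(b * (1 - l) - a * - c) / (1 - l)^2 = b / (1 - l) + a * c / (1 - l)^2"
    using assms by (simp add: power2_eq_square add_divide_distrib)
  ultimately show ?thesis by simp
qed

lemma has_real_derivative_potential_line:
  assumes "\<forall>j\<in>{1..N}. load L \<gamma> m j < 1"
  shows "((\<lambda>t. potential L N \<gamma> g (\<lambda>i j. m i j + (t - t0) * d i j)) has_real_derivative
           (\<Sum>j\<in>{1..N}. \<Sum>l\<in>{1..L}. d l j * marginal_cost L \<gamma> g m l j)) (at t0)"
proof -
  define S where "S j = (\<Sum>i\<in>{1..L}. m i j * g i j)" for j
  define T where "T j = (\<Sum>i\<in>{1..L}. d i j * g i j)" for j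
  have line: "(\<Sum>i\<in>{1..L}. (m i j + s * d i j) * g i j) = S j + s * T j" for s j
    unfolding S_def T_def by (simp add: algebra_simps sum.distrib sum_distrib_left)
  have grad: "T j / (1 - load L \<gamma> m j) + S j * load L \<gamma> d j / (1 - load L \<gamma> m j)^2
      = (\<Sum>l\<in>{1..L}. d l j * marginal_cost L \<gamma> g m l j)" for j
    unfolding T_def load_def marginal_cost_def S_def[symmetric]
    by (simp add: sum_divide_distrib sum_distrib_left sum_distrib_right sum.distrib
        algebra_simps flip: S_def)
  show ?thesis
    unfolding potential_def load_line line grad[symmetric]
    by (intro DERIV_sum has_real_derivative_ratio_line) (use assms in auto)
qed

lemma eventually_load_line_lt_1:
  assumes "\<forall>j\<in>{1..N}. load L \<gamma> m j < 1"
  shows "\<forall>\<^sub>F t in nhds t0. \<forall>j\<in>{1..N}. load L \<gamma> (\<lambda>i j. m i j + (t - t0) * d i j) j < 1"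
proof (intro eventually_ball_finite ballI)
  fix j assume "j \<in> {1..N}"
  have "((\<lambda>t. load L \<gamma> m j + (t - t0) * load L \<gamma> d j) \<longlongrightarrow> load L \<gamma> m j) (nhds t0)"
    by (auto intro!: tendsto_eq_intros filterlim_ident)
  from order_tendstoD(2)[OF this] show "\<forall>\<^sub>F t in nhds t0. load L \<gamma> (\<lambda>i j. m i j + (t - t0) * d i j) j < 1"
    using assms \<open>j \<in> {1..N}\<close> by (simp add: load_line)
qed simp

lemma sum_sum_unit:
  fixes f :: "nat \<Rightarrow> nat \<Rightarrow> real"
  assumes "l0 \<in> A" "j0 \<in> B" "finite A" "finite B"
  shows "(\<Sum>j\<in>B. \<Sum>l\<in>A. (if l = l0 \<and> j = j0 then 1 else 0) * f l j) = f l0 j0"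
proof -
  have "(\<Sum>l\<in>A. (if l = l0 \<and> j = j0 then 1 else 0) * f l j) = (if j = j0 then f l0 j else 0)" for j
    using assms by (cases "j = j0") (simp_all add: if_distrib[of "\<lambda>x. x * _"] sum.delta cong: if_cong)
  then show ?thesis using assms by (simp add: sum.delta)
qed

lemma social_cost_has_tolled_cost_derivative:
  assumes loads: "\<forall>j\<in>{1..N}. load L \<gamma> m j < 1" and l: "l \<in> {1..L}" and j: "j \<in> {1..N}"
  shows "((\<lambda>x. real_of_ereal (social_cost L N \<gamma> \<sigma>2 h (m(l := (m l)(j := x)))))
           has_real_derivative real_of_ereal (tolled_cost L \<gamma> \<sigma>2 h m l j)) (at (m l j))"
proof -
  define d where "d = (\<lambda>i j'. if i = l \<and> j' = j then (1::real) else 0)"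
  define p where "p x = (\<lambda>i j'. m i j' + (x - m l j) * d i j')" for x
  have upd: "m(l := (m l)(j := x)) = p x" for x
    by (auto simp: p_def d_def fun_eq_iff)
  have "((\<lambda>x. potential L N \<gamma> (gcoef \<gamma> \<sigma>2 h) (p x)) has_real_derivative
          marginal_cost L \<gamma> (gcoef \<gamma> \<sigma>2 h) m l j) (at (m l j))"
    using has_real_derivative_potential_line[OF loads, of _ "m l j" d]
    unfolding p_def d_def sum_sum_unit[OF l j finite_atLeastAtMost finite_atLeastAtMost] .
  moreover have "\<forall>\<^sub>F x in nhds (m l j).
      potential L N \<gamma> (gcoef \<gamma> \<sigma>2 h) (p x) = real_of_ereal (social_cost L N \<gamma> \<sigma>2 h (p x))"
    using eventually_load_line_lt_1[OF loads, of "m l j" d]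
    by eventually_elim (simp add: social_cost_eq_potential p_def)
  ultimately show ?thesis
    using tolled_cost_eq_marginal_cost[of L \<gamma> m j \<sigma>2 h l] loads j
    by (simp add: upd DERIV_cong_ev)
qed

lemma social_cost_overloaded:
  assumes nonneg: "\<forall>i\<in>{1..L}. 0 \<le> m i j"
      and gcoef_pos: "\<forall>i\<in>{1..L}. 0 < gcoef \<gamma> \<sigma>2 h i j"
      and j: "j \<in> {1..N}" and overload: "1 \<le> load L \<gamma> m j"
  shows "social_cost L N \<gamma> \<sigma>2 h m = \<infinity>"
proof -
  have "\<exists>i\<in>{1..L}. m i j \<noteq> 0"
  proof (rule ccontr)
    assume "\<not> ?thesis"
    then have "load L \<gamma> m j = 0" by (simp add: load_def)
    with overload show False by simp
  qed
  then obtain i where i: "i \<in> {1..L}" and "m i j \<noteq> 0" by blast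
  then have "0 < m i j" "0 < gcoef \<gamma> \<sigma>2 h i j"
    using nonneg gcoef_pos by (simp_all add: order_le_neq_trans)
  then have "ereal (m i j * gcoef \<gamma> \<sigma>2 h i j) * cfun (load L \<gamma> m j) = \<infinity>"
    using overload by (simp add: cfun_def)
  then have "(\<Sum>i\<in>{1..L}. ereal (m i j * gcoef \<gamma> \<sigma>2 h i j) * cfun (load L \<gamma> m j)) = \<infinity>"
    unfolding sum_Pinfty using i by blast
  then show ?thesis
    unfolding social_cost_def sum_Pinfty using j by blast
qed

lemma uniform_profile:
  assumes M_nonneg: "\<forall>l\<in>{1..L}. 0 \<le> M l" and \<gamma>_nonneg: "\<forall>l\<in>{1..L}. 0 \<le> \<gamma> l"
      and feasible: "(\<Sum>l\<in>{1..L}. \<gamma> l * M l) < real N"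
  shows "is_profile L N M (\<lambda>l j. M l / real N)"
    and "\<forall>j\<in>{1..N}. load L \<gamma> (\<lambda>l j. M l / real N) j < 1"
proof -
  have "0 \<le> (\<Sum>l\<in>{1..L}. \<gamma> l * M l)"
    using M_nonneg \<gamma>_nonneg by (intro sum_nonneg) simp
  with feasible have "0 < real N" by linarith
  then show "is_profile L N M (\<lambda>l j. M l / real N)"
    using M_nonneg by (simp add: is_profile_def)
  show "\<forall>j\<in>{1..N}. load L \<gamma> (\<lambda>l j. M l / real N) j < 1"
    using feasible \<open>0 < real N\<close> by (simp add: load_def sum_divide_distrib[symmetric])
qed

lemma social_optimum_loads_lt_1:
  assumes M_nonneg: "\<forall>l\<in>{1..L}. 0 \<le> M l" and \<gamma>_nonneg: "\<forall>l\<in>{1..L}. 0 \<le> \<gamma> l"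
      and gcoef_pos: "\<forall>l\<in>{1..L}. \<forall>j\<in>{1..N}. 0 < gcoef \<gamma> \<sigma>2 h l j"
      and feasible: "(\<Sum>l\<in>{1..L}. \<gamma> l * M l) < real N"
      and profile: "is_profile L N M m"
      and optimal: "\<forall>m'. is_profile L N M m' \<longrightarrow> social_cost L N \<gamma> \<sigma>2 h m \<le> social_cost L N \<gamma> \<sigma>2 h m'"
  shows "\<forall>j\<in>{1..N}. load L \<gamma> m j < 1"
proof (rule ccontr)
  assume "\<not> ?thesis"
  then obtain j where j: "j \<in> {1..N}" and "1 \<le> load L \<gamma> m j" by force
  with profile gcoef_pos have "social_cost L N \<gamma> \<sigma>2 h m = \<infinity>"
    by (intro social_cost_overloaded) (auto simp: is_profile_def)
  moreover have "social_cost L N \<gamma> \<sigma>2 h m \<le> social_cost L N \<gamma> \<sigma>2 h (\<lambda>l j. M l / real N)"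
    using optimal uniform_profile(1)[OF M_nonneg \<gamma>_nonneg feasible] by blast
  moreover have "social_cost L N \<gamma> \<sigma>2 h (\<lambda>l j. M l / real N)
      = ereal (potential L N \<gamma> (gcoef \<gamma> \<sigma>2 h) (\<lambda>l j. M l / real N))"
    by (rule social_cost_eq_potential[OF uniform_profile(2)[OF M_nonneg \<gamma>_nonneg feasible]])
  ultimately show False by simp
qed

lemma has_real_derivative_nonneg_at_right_min:
  fixes f :: "real \<Rightarrow> real"
  assumes "(f has_real_derivative D) (at x)" and "\<forall>\<^sub>F t in at_right x. f x \<le> f t"
  shows "0 \<le> D"
proof (rule ccontr)
  assume "\<not> 0 \<le> D"
  then obtain \<delta> where "\<delta> > 0" and dec: "\<forall>s>0. s < \<delta> \<longrightarrow> f (x + s) < f x"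
    using DERIV_neg_dec_right[OF assms(1)] by (meson not_le)
  have "\<forall>\<^sub>F t in at_right x. f t < f x"
    unfolding eventually_at_right_field
  proof (intro exI[of _ "x + \<delta>"] conjI allI impI)
    fix t assume "x < t" "t < x + \<delta>"
    then show "f t < f x"
      using dec[rule_format, of "t - x"] by simp
  qed (use \<open>\<delta> > 0\<close> in simp)
  with assms(2) have "\<forall>\<^sub>F t in at_right x. False"
    by eventually_elim simp
  then show False by simp
qed

lemma social_optimum_marginal_cost_le:
  assumes profile: "is_profile L N M m"
      and optimal: "\<forall>m'. is_profile L N M m' \<longrightarrow> social_cost L N \<gamma> \<sigma>2 h m \<le> social_cost L N \<gamma> \<sigma>2 h m'"
      and loads: "\<forall>j\<in>{1..N}. load L \<gamma> m j < 1"
      and l: "l \<in> {1..L}" and j: "j \<in> {1..N}" and k: "k \<in> {1..N}" and pos: "0 < m l j"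
  shows "marginal_cost L \<gamma> (gcoef \<gamma> \<sigma>2 h) m l j \<le> marginal_cost L \<gamma> (gcoef \<gamma> \<sigma>2 h) m l k"
proof -
  define e where "e (a::nat) (b::nat) = (\<lambda>i j'. if i = a \<and> j' = b then (1::real) else 0)" for a b
  define d where "d = (\<lambda>i j'. e l k i j' - e l j i j')"
  define p where "p t = (\<lambda>i j'. m i j' + t * d i j')" for t
  define \<Phi> where "\<Phi> t = potential L N \<gamma> (gcoef \<gamma> \<sigma>2 h) (p t)" for t
  have deriv: "(\<Phi> has_real_derivative
      marginal_cost L \<gamma> (gcoef \<gamma> \<sigma>2 h) m l k - marginal_cost L \<gamma> (gcoef \<gamma> \<sigma>2 h) m l j) (at 0)"
    using has_real_derivative_potential_line[OF loads, of "gcoef \<gamma> \<sigma>2 h" 0 d]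
    unfolding \<Phi>_def p_def diff_zero d_def e_def left_diff_distrib sum_subtractf
      sum_sum_unit[OF l j finite_atLeastAtMost finite_atLeastAtMost]
      sum_sum_unit[OF l k finite_atLeastAtMost finite_atLeastAtMost] .
  have profile_p: "is_profile L N M (p t)" if "0 \<le> t" "t \<le> m l j" for t
  proof -
    have "0 \<le> p t i j'" if "i \<in> {1..L}" "j' \<in> {1..N}" for i j'
      using profile \<open>i \<in> {1..L}\<close> \<open>j' \<in> {1..N}\<close> \<open>0 \<le> t\<close> \<open>t \<le> m l j\<close>
      by (auto simp: is_profile_def p_def d_def e_def)
    moreover have "(\<Sum>j'\<in>{1..N}. d i j') = 0" for i
      using j k by (cases "i = l") (simp_all add: d_def e_def sum_subtractf)
    then have "(\<Sum>j'\<in>{1..N}. p t i j') = (\<Sum>j'\<in>{1..N}. m i j')" for i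
      by (simp add: p_def sum.distrib flip: sum_distrib_left)
    ultimately show ?thesis
      using profile by (simp add: is_profile_def)
  qed
  have "\<forall>\<^sub>F t in at_right 0. 0 < t \<and> t < m l j \<and> (\<forall>j'\<in>{1..N}. load L \<gamma> (p t) j' < 1)"
  proof (intro eventually_conj)
    show "\<forall>\<^sub>F t in at_right 0. t < m l j"
      using order_tendstoD(2)[OF tendsto_ident_at pos] .
    show "\<forall>\<^sub>F t in at_right 0. \<forall>j'\<in>{1..N}. load L \<gamma> (p t) j' < 1"
      using eventually_load_line_lt_1[OF loads, of 0 d]
      unfolding eventually_at_filter p_def diff_zero by (rule eventually_mono) simp
  qed (rule eventually_at_right_less)
  then have "\<forall>\<^sub>F t in at_right 0. \<Phi> 0 \<le> \<Phi> t"
  proof eventually_elim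
    case (elim t)
    then have "social_cost L N \<gamma> \<sigma>2 h (p 0) \<le> social_cost L N \<gamma> \<sigma>2 h (p t)"
      using optimal profile_p[of t] by (simp add: p_def)
    then show ?case
      using elim loads by (simp add: \<Phi>_def social_cost_eq_potential p_def)
  qed
  from has_real_derivative_nonneg_at_right_min[OF deriv this] show ?thesis by simp
qed

lemma social_optimum_is_nash:
  assumes M_nonneg: "\<forall>l\<in>{1..L}. 0 \<le> M l" and \<gamma>_nonneg: "\<forall>l\<in>{1..L}. 0 \<le> \<gamma> l"
      and gcoef_pos: "\<forall>l\<in>{1..L}. \<forall>j\<in>{1..N}. 0 < gcoef \<gamma> \<sigma>2 h l j"
      and feasible: "(\<Sum>l\<in>{1..L}. \<gamma> l * M l) < real N"
      and profile: "is_profile L N M m"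
      and optimal: "\<forall>m'. is_profile L N M m' \<longrightarrow> social_cost L N \<gamma> \<sigma>2 h m \<le> social_cost L N \<gamma> \<sigma>2 h m'"
  shows "is_nash L N M m (tolled_cost L \<gamma> \<sigma>2 h m)"
proof -
  have loads: "\<forall>j\<in>{1..N}. load L \<gamma> m j < 1"
    using social_optimum_loads_lt_1[OF M_nonneg \<gamma>_nonneg gcoef_pos feasible profile optimal] .
  show ?thesis
    unfolding is_nash_def
    using profile social_optimum_marginal_cost_le[OF profile optimal loads]
    by (simp add: loads tolled_cost_eq_marginal_cost)
qed

theorem proposition12:
  fixes L N :: nat and M \<gamma> :: "nat \<Rightarrow> real" and h :: "nat \<Rightarrow> nat \<Rightarrow> real" and \<sigma>2 :: real
  assumes M_pos: "\<forall>l\<in>{1..L}. M l > 0"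
      and \<gamma>_pos: "\<forall>l\<in>{1..L}. \<gamma> l > 0"
      and h_pos: "\<forall>l\<in>{1..L}. \<forall>j\<in>{1..N}. h l j > 0"
      and \<sigma>_pos: "\<sigma>2 > 0"
      and feasible: "(\<Sum>l\<in>{1..L}. \<gamma> l * M l) < real N"
  shows "(\<forall>m :: nat \<Rightarrow> nat \<Rightarrow> real. (\<forall>j\<in>{1..N}. load L \<gamma> m j < 1) \<longrightarrow>
            (\<forall>l\<in>{1..L}. \<forall>j\<in>{1..N}.
               ((\<lambda>x. real_of_ereal (social_cost L N \<gamma> \<sigma>2 h (m(l := (m l)(j := x)))))
                  has_real_derivative real_of_ereal (tolled_cost L \<gamma> \<sigma>2 h m l j)) (at (m l j))))
       \<and> (\<forall>m :: nat \<Rightarrow> nat \<Rightarrow> real. is_profile L N M m \<and>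
            (\<forall>m'. is_profile L N M m' \<longrightarrow> social_cost L N \<gamma> \<sigma>2 h m \<le> social_cost L N \<gamma> \<sigma>2 h m')
            \<longrightarrow> is_nash L N M m (tolled_cost L \<gamma> \<sigma>2 h m))"
proof (intro conjI allI impI ballI)
  fix m l j
  assume "\<forall>j\<in>{1..N}. load L \<gamma> m j < 1" "l \<in> {1..L}" "j \<in> {1..N}"
  then show "((\<lambda>x. real_of_ereal (social_cost L N \<gamma> \<sigma>2 h (m(l := (m l)(j := x)))))
      has_real_derivative real_of_ereal (tolled_cost L \<gamma> \<sigma>2 h m l j)) (at (m l j))"
    by (rule social_cost_has_tolled_cost_derivative)
next
  fix m :: "nat \<Rightarrow> nat \<Rightarrow> real"
  have "\<forall>l\<in>{1..L}. \<forall>j\<in>{1..N}. 0 < gcoef \<gamma> \<sigma>2 h l j"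
    using \<gamma>_pos h_pos \<sigma>_pos by (simp add: gcoef_def)
  moreover assume "is_profile L N M m \<and>
      (\<forall>m'. is_profile L N M m' \<longrightarrow> social_cost L N \<gamma> \<sigma>2 h m \<le> social_cost L N \<gamma> \<sigma>2 h m')"
  ultimately show "is_nash L N M m (tolled_cost L \<gamma> \<sigma>2 h m)"
    using M_pos \<gamma>_pos feasible by (intro social_optimum_is_nash) (auto simp: less_imp_le)
qed

end
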